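(* Let $\mathcal U=(V,\tilde V,W,\tilde W,R)$ be a gradient space. Every regular Rellich–Kondrachov cone $\mathcal K\subseteq\mathrm{Sob}(\mathcal U)$ is a Poincaré set, i.e. there is $C>0$ with $\|u\|_V\le C\|g_u\|_W$ for all $u\in\mathcal K$.
   Context: Let $\tilde V,\tilde W$ be vector spaces over $\mathbf R$ or $\mathbf C$. A gradient relation is a set $R\subseteq\tilde V\times\tilde W$ such that (G1) if $(u,g)\in R$ and $(u',g')\in R$ then $(u+u',g+g')\in R$; (G2) if $(u,g)\in R$ and $\alpha>0$ then $(\alpha u,\alpha g)\in R$. A gradient space $\mathcal U=(V,\tilde V,W,\tilde W,R)$ consists of vector spaces $\tilde V,\tilde W$, a gradient relation $R\subseteq\tilde V\times\tilde W$, and linear subspaces $V\subseteq\tilde V$, $W\subseteq\tilde W$ such that: (GS1) $V$ is a reflexive Banach space with norm $\|\cdot\|_V$; (GS2) $W$ is a reflexive and strictly convex Banach space with norm $\|\cdot\|_W$; (GS3) if $(u,g)\in R$ with $u\in V$, $g\in W$, then there exists $g'\in W$ with $(-u,g')\in R$; (GS4) if $u,u_i\in V$ and $g,g_i\in W$ with $(u_i,g_i)\in R$ for $i=1,2,\dots$, $\|u-u_i\|_V\to0$ and $\|g-g_i\|_W\to0$, then $(u,g)\in R$. The Sobolev space of $\mathcal U$ is $\mathrm{Sob}(\mathcal U)=\{u\in V:(u,g)\in R\text{ for some }g\in W\}$. Each $u\in\mathrm{Sob}(\mathcal U)$ has a unique minimal gradient $g_u\in W$: $(u,g_u)\in R$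 and $\|g_u\|_W\le\|g\|_W$ for all $g\in W$ with $(u,g)\in R$. A Poincaré set is a subset $A\subseteq\mathrm{Sob}(\mathcal U)$ for which there is $C>0$ such that $\|u\|_V\le C\|g\|_W$ for all $u\in A$ and all $g\in W$ with $(u,g)\in R$. A cone $\mathcal K\subseteq\mathrm{Sob}(\mathcal U)$ (i.e. $u\in\mathcal K,\alpha>0\Rightarrow\alpha u\in\mathcal K$) is a Rellich–Kondrachov cone if for every sequence $\{u_i\}\subseteq\mathcal K$ such that $\{u_i\}$ is bounded in $V$ and $\{g_{u_i}\}$ is bounded in $W$, there is a subsequence converging in $V$ to an element of $\mathcal K$. It is regular if, for $u\in\mathcal K$, $g_u=0$ implies $u=0$. *)

theory Defs
  imports "HOL-Analysis.Analysis"
begin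

definition norm_on :: "'a::real_vector set \<Rightarrow> ('a \<Rightarrow> real) \<Rightarrow> bool" where
  "norm_on V n \<longleftrightarrow> subspace V \<and>
     (\<forall>x\<in>V. 0 \<le> n x) \<and> (\<forall>x\<in>V. n x = 0 \<longleftrightarrow> x = 0) \<and>
     (\<forall>x\<in>V. \<forall>y\<in>V. n (x + y) \<le> n x + n y) \<and>
     (\<forall>c. \<forall>x\<in>V. n (c *\<^sub>R x) = \<bar>c\<bar> * n x)"

definition banach_on :: "'a::real_vector set \<Rightarrow> ('a \<Rightarrow> real) \<Rightarrow> bool" where
  "banach_on V n \<longleftrightarrow> norm_on V n \<and>
     (\<forall>X. (\<forall>i. X i \<in> V) \<and> (\<forall>e>0. \<exists>N. \<forall>m\<ge>N. \<forall>k\<ge>N. n (X m - X k) < e)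
        \<longrightarrow> (\<exists>x\<in>V. (\<lambda>i. n (X i - x)) \<longlonglongrightarrow> 0))"

text \<open>Continuous linear functionals on (V, n), normalised to vanish outside V.\<close>
definition dual_on :: "'a::real_vector set \<Rightarrow> ('a \<Rightarrow> real) \<Rightarrow> ('a \<Rightarrow> real) set" where
  "dual_on V n = {f. (\<forall>x\<in>V. \<forall>y\<in>V. f (x + y) = f x + f y) \<and>
                     (\<forall>c. \<forall>x\<in>V. f (c *\<^sub>R x) = c * f x) \<and>
                     (\<exists>K. \<forall>x\<in>V. \<bar>f x\<bar> \<le> K * n x) \<and>
                     (\<forall>x. x \<notin> V \<longrightarrow> f x = 0)}"

definition dual_norm :: "'a::real_vector set \<Rightarrow> ('a \<Rightarrow> real) \<Rightarrow> ('a \<Rightarrow> real) \<Rightarrow> real" where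
  "dual_norm V n f = Sup {\<bar>f x\<bar> | x. x \<in> V \<and> n x \<le> 1}"

definition reflexive_on :: "'a::real_vector set \<Rightarrow> ('a \<Rightarrow> real) \<Rightarrow> bool" where
  "reflexive_on V n \<longleftrightarrow>
     (\<forall>\<Phi> :: ('a \<Rightarrow> real) \<Rightarrow> real.
        (\<forall>f\<in>dual_on V n. \<forall>h\<in>dual_on V n. \<Phi> (\<lambda>x. f x + h x) = \<Phi> f + \<Phi> h) \<and>
        (\<forall>c. \<forall>f\<in>dual_on V n. \<Phi> (\<lambda>x. c * f x) = c * \<Phi> f) \<and>
        (\<exists>K. \<forall>f\<in>dual_on V n. \<bar>\<Phi> f\<bar> \<le> K * dual_norm V n f)
      \<longrightarrow> (\<exists>x\<in>V. \<forall>f\<in>dual_on V n. \<Phi> f = f x))"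

definition strictly_convex_on :: "'a::real_vector set \<Rightarrow> ('a \<Rightarrow> real) \<Rightarrow> bool" where
  "strictly_convex_on V n \<longleftrightarrow>
     (\<forall>x\<in>V. \<forall>y\<in>V. n x = 1 \<and> n y = 1 \<and> x \<noteq> y \<longrightarrow> n ((1/2) *\<^sub>R (x + y)) < 1)"

definition gradient_relation :: "('a::real_vector \<times> 'b::real_vector) set \<Rightarrow> bool" where
  "gradient_relation R \<longleftrightarrow>
     (\<forall>u g u' g'. (u, g) \<in> R \<and> (u', g') \<in> R \<longrightarrow> (u + u', g + g') \<in> R) \<and>
     (\<forall>u g \<alpha>. (u, g) \<in> R \<and> \<alpha> > 0 \<longrightarrow> (\<alpha> *\<^sub>R u, \<alpha> *\<^sub>R g) \<in> R)"

text \<open>Gradient space (V, nV) \<subseteq> Vt = UNIV::'a, (W, nW) \<subseteq> Wt = UNIV::'b, relation R.\<close>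
definition gradient_space ::
  "'a::real_vector set \<Rightarrow> ('a \<Rightarrow> real) \<Rightarrow> 'b::real_vector set \<Rightarrow> ('b \<Rightarrow> real)
     \<Rightarrow> ('a \<times> 'b) set \<Rightarrow> bool" where
  "gradient_space V nV W nW R \<longleftrightarrow>
     gradient_relation R \<and>
     banach_on V nV \<and> reflexive_on V nV \<and>
     banach_on W nW \<and> reflexive_on W nW \<and> strictly_convex_on W nW \<and>
     (\<forall>u g. u \<in> V \<and> g \<in> W \<and> (u, g) \<in> R \<longrightarrow> (\<exists>g'\<in>W. (- u, g') \<in> R)) \<and>
     (\<forall>u g us gs. u \<in> V \<and> g \<in> W \<and> (\<forall>i. us i \<in> V \<and> gs i \<in> W \<and> (us i, gs i) \<in> R) \<and>
        (\<lambda>i. nV (u - us i)) \<longlonglongrightarrow> 0 \<and> (\<lambda>i. nW (g - gs i)) \<longlonglongrightarrow> 0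
        \<longrightarrow> (u, g) \<in> R)"

definition Sob :: "'a::real_vector set \<Rightarrow> 'b::real_vector set \<Rightarrow> ('a \<times> 'b) set \<Rightarrow> 'a set" where
  "Sob V W R = {u \<in> V. \<exists>g\<in>W. (u, g) \<in> R}"

text \<open>The minimal gradient g_u (unique in a gradient space).\<close>
definition min_grad :: "'b::real_vector set \<Rightarrow> ('b \<Rightarrow> real) \<Rightarrow> ('a::real_vector \<times> 'b) set \<Rightarrow> 'a \<Rightarrow> 'b" where
  "min_grad W nW R u =
     (THE g. g \<in> W \<and> (u, g) \<in> R \<and> (\<forall>g'\<in>W. (u, g') \<in> R \<longrightarrow> nW g \<le> nW g'))"

definition poincare_set ::
  "'a::real_vector set \<Rightarrow> ('a \<Rightarrow> real) \<Rightarrow> 'b::real_vector set \<Rightarrow> ('b \<Rightarrow> real) \<Rightarrow> ('a \<times> 'b) set \<Rightarrow> 'a set \<Rightarrow> bool" where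
  "poincare_set V nV W nW R A \<longleftrightarrow> A \<subseteq> Sob V W R \<and>
     (\<exists>C>0. \<forall>u\<in>A. \<forall>g\<in>W. (u, g) \<in> R \<longrightarrow> nV u \<le> C * nW g)"

definition cone_in :: "'a::real_vector set \<Rightarrow> 'a set \<Rightarrow> bool" where
  "cone_in S K \<longleftrightarrow> K \<subseteq> S \<and> (\<forall>u\<in>K. \<forall>\<alpha>>0. \<alpha> *\<^sub>R u \<in> K)"

definition RK_cone ::
  "'a::real_vector set \<Rightarrow> ('a \<Rightarrow> real) \<Rightarrow> 'b::real_vector set \<Rightarrow> ('b \<Rightarrow> real) \<Rightarrow> ('a \<times> 'b) set \<Rightarrow> 'a set \<Rightarrow> bool" where
  "RK_cone V nV W nW R K \<longleftrightarrow> cone_in (Sob V W R) K \<and>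
     (\<forall>us :: nat \<Rightarrow> 'a. (\<forall>i. us i \<in> K) \<and> (\<exists>B. \<forall>i. nV (us i) \<le> B) \<and>
           (\<exists>B. \<forall>i. nW (min_grad W nW R (us i)) \<le> B)
        \<longrightarrow> (\<exists>r u. strict_mono r \<and> u \<in> K \<and> (\<lambda>i. nV (us (r i) - u)) \<longlonglongrightarrow> 0))"

definition regular_cone :: "'b::real_vector set \<Rightarrow> ('b \<Rightarrow> real) \<Rightarrow> ('a::real_vector \<times> 'b) set \<Rightarrow> 'a set \<Rightarrow> bool" where
  "regular_cone W nW R K \<longleftrightarrow> (\<forall>u\<in>K. min_grad W nW R u = 0 \<longrightarrow> u = 0)"

end

theory Submission
  imports Defs "HOL-Library.Function_Algebras"
begin

text \<open>If no constant works, normalising violating elements of \<open>K\<close> gives unit vectors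
  \<open>u\<^sub>i \<in> K\<close> with \<open>\<parallel>g\<^sub>u\<^sub>i\<parallel> \<rightarrow> 0\<close>. By the Rellich--Kondrachov property a subsequence converges
  in \<open>V\<close> to a unit vector \<open>u \<in> K\<close>; closedness of \<open>R\<close> gives \<open>(u, 0) \<in> R\<close>, hence \<open>g\<^sub>u = 0\<close>,
  and regularity forces \<open>u = 0\<close>, a contradiction.

  The real work is that \<open>g\<^sub>u\<close> is well defined: the gradients of \<open>u\<close> form a nonempty closed
  convex subset of \<open>W\<close>, and such a set has exactly one element of minimal norm. Uniqueness is
  strict convexity. For existence, a Hahn--Banach functional on the dual, dominated by the upper
  limit along a minimising sequence, is represented by a point of \<open>W\<close> (reflexivity); the
  separation theorem puts this point into the set, and a norming functional shows its norm is
  the infimum.\<close>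

section \<open>Hahn--Banach extension\<close>

definition sublinear_on :: "'v::real_vector set \<Rightarrow> ('v \<Rightarrow> real) \<Rightarrow> bool" where
  "sublinear_on S p \<longleftrightarrow>
     (\<forall>x\<in>S. \<forall>y\<in>S. p (x + y) \<le> p x + p y) \<and> (\<forall>c\<ge>0. \<forall>x\<in>S. p (c *\<^sub>R x) = c * p x)"

definition linear_on :: "'v::real_vector set \<Rightarrow> ('v \<Rightarrow> real) \<Rightarrow> bool" where
  "linear_on S f \<longleftrightarrow> (\<forall>x\<in>S. \<forall>y\<in>S. f (x + y) = f x + f y) \<and> (\<forall>c. \<forall>x\<in>S. f (c *\<^sub>R x) = c * f x)"

text \<open>Partial dominated extensions are represented by their graphs, so that Zorn's lemma
  can be applied to set inclusion.\<close>
definition dominated_graph :: "'v::real_vector set \<Rightarrow> ('v \<Rightarrow> real) \<Rightarrow> ('v \<times> real) set \<Rightarrow> bool" where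
  "dominated_graph S p G \<longleftrightarrow> G \<subseteq> S \<times> UNIV \<and> (0, 0) \<in> G \<and>
     (\<forall>x a y b. (x, a) \<in> G \<longrightarrow> (y, b) \<in> G \<longrightarrow> (x + y, a + b) \<in> G) \<and>
     (\<forall>x a c. (x, a) \<in> G \<longrightarrow> (c *\<^sub>R x, c * a) \<in> G) \<and>
     (\<forall>x a. (x, a) \<in> G \<longrightarrow> a \<le> p x)"

lemma dominated_graphD:
  assumes "dominated_graph S p G"
  shows "\<And>x a. (x, a) \<in> G \<Longrightarrow> x \<in> S" "(0, 0) \<in> G"
    "\<And>x a y b. (x, a) \<in> G \<Longrightarrow> (y, b) \<in> G \<Longrightarrow> (x + y, a + b) \<in> G"
    "\<And>x a c. (x, a) \<in> G \<Longrightarrow> (c *\<^sub>R x, c * a) \<in> G"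
    "\<And>x a. (x, a) \<in> G \<Longrightarrow> a \<le> p x"
  using assms unfolding dominated_graph_def by blast+

lemma sublinear_on_add: "sublinear_on S p \<Longrightarrow> x \<in> S \<Longrightarrow> y \<in> S \<Longrightarrow> p (x + y) \<le> p x + p y"
  unfolding sublinear_on_def by blast

lemma sublinear_on_scaleR: "sublinear_on S p \<Longrightarrow> c \<ge> 0 \<Longrightarrow> x \<in> S \<Longrightarrow> p (c *\<^sub>R x) = c * p x"
  unfolding sublinear_on_def by blast

lemma sublinear_on_zero:
  assumes "sublinear_on S p" "subspace S"
  shows "p 0 = 0"
  using assms subspace_0[of S] unfolding sublinear_on_def by (metis mult_zero_left order_refl scaleR_zero_left)

lemma dominated_graph_Union_chain:
  assumes C: "C \<in> chains {G. dominated_graph S p G}" and S: "subspace S" and p: "sublinear_on S p"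
  shows "dominated_graph S p (insert (0, 0) (\<Union>C))"
proof -
  have dom: "dominated_graph S p G" if "G \<in> C" for G
    using C that by (auto simp: chains_def)
  have mem_cases: "(x, a) = (0, 0) \<or> (\<exists>G\<in>C. (x, a) \<in> G)" if "(x, a) \<in> insert (0, 0) (\<Union>C)" for x a
    using that by blast
  show ?thesis
    unfolding dominated_graph_def
  proof (intro conjI allI impI subsetI)
    fix w assume "w \<in> insert (0, 0) (\<Union>C)"
    then show "w \<in> S \<times> UNIV"
      using subspace_0[OF S] dominated_graphD(1)[OF dom] by (cases w) blast
  next
    fix x a y b
    assume xa: "(x, a) \<in> insert (0, 0) (\<Union>C)" and yb: "(y, b) \<in> insert (0, 0) (\<Union>C)"
    show "(x + y, a + b) \<in> insert (0, 0) (\<Union>C)"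
    proof (cases "(x, a) = (0, 0) \<or> (y, b) = (0, 0)")
      case True
      then show ?thesis using xa yb by auto
    next
      case False
      then obtain G H where G: "G \<in> C" "(x, a) \<in> G" and H: "H \<in> C" "(y, b) \<in> H"
        using mem_cases[OF xa] mem_cases[OF yb] by blast
      from C G(1) H(1) have "G \<subseteq> H \<or> H \<subseteq> G" by (auto simp: chains_def chain_subset_def)
      then have "(x + y, a + b) \<in> G \<or> (x + y, a + b) \<in> H"
        using dominated_graphD(3)[OF dom[OF G(1)], of x a y b] dominated_graphD(3)[OF dom[OF H(1)], of x a y b]
          G H by blast
      then show ?thesis using G(1) H(1) by blast
    qed
  next
    fix x a c assume "(x, a) \<in> insert (0, 0) (\<Union>C)"
    then consider "(x, a) = (0, 0)" | G where "G \<in> C" "(x, a) \<in> G" by blast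
    then show "(c *\<^sub>R x, c * a) \<in> insert (0, 0) (\<Union>C)"
    proof cases
      case (2 G)
      then show ?thesis using dominated_graphD(4)[OF dom, of G x a c] by blast
    qed simp
  next
    fix x a assume "(x, a) \<in> insert (0, 0) (\<Union>C)"
    then consider "(x, a) = (0, 0)" | G where "G \<in> C" "(x, a) \<in> G" by blast
    then show "a \<le> p x"
    proof cases
      case 1
      then show ?thesis using sublinear_on_zero[OF p S] by simp
    next
      case (2 G)
      then show ?thesis using dominated_graphD(5)[OF dom, of G x a] by blast
    qed
  qed simp
qed

lemma dominated_graph_single_valued:
  assumes G: "dominated_graph S p G" and p: "sublinear_on S p" and S: "subspace S"
    and "(x, a) \<in> G" "(x, b) \<in> G"
  shows "a = b"
proof -
  have "(x + (-1) *\<^sub>R x, a + (-1) * b) \<in> G" "(x + (-1) *\<^sub>R x, b + (-1) * a) \<in> G"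
    using dominated_graphD(3,4)[OF G] assms(4,5) by blast+
  then have "a - b \<le> p 0" "b - a \<le> p 0"
    using dominated_graphD(5)[OF G] by fastforce+
  then show ?thesis using sublinear_on_zero[OF p S] by simp
qed

text \<open>The range of admissible values is nonempty by subadditivity of \<open>p\<close>.\<close>
lemma dominated_graph_extension_value:
  assumes G: "dominated_graph S p G" and p: "sublinear_on S p" and S: "subspace S" and z: "z \<in> S"
  obtains c where "\<And>x a. (x, a) \<in> G \<Longrightarrow> a - p (x - z) \<le> c"
    and "\<And>y b. (y, b) \<in> G \<Longrightarrow> c \<le> p (y + z) - b"
proof -
  note GS = dominated_graphD(1)[OF G]
  have between: "a - p (x - z) \<le> p (y + z) - b" if "(x, a) \<in> G" "(y, b) \<in> G" for x a y b
  proof -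
    have "a + b \<le> p ((x - z) + (y + z))"
      using dominated_graphD(5)[OF G dominated_graphD(3)[OF G that]] by simp
    also have "\<dots> \<le> p (x - z) + p (y + z)"
      using GS[OF that(1)] GS[OF that(2)] z S
      by (intro sublinear_on_add[OF p]) (simp_all add: subspace_diff subspace_add)
    finally show ?thesis by simp
  qed
  define L where "L = {a - p (x - z) | x a. (x, a) \<in> G}"
  from dominated_graphD(2)[OF G] have "L \<noteq> {}" "bdd_above L" using between unfolding L_def bdd_above_def by blast+
  show ?thesis
  proof
    show "a - p (x - z) \<le> Sup L" if "(x, a) \<in> G" for x a
      using that \<open>bdd_above L\<close> by (intro cSup_upper) (auto simp: L_def)
    show "Sup L \<le> p (y + z) - b" if "(y, b) \<in> G" for y b
      using that \<open>L \<noteq> {}\<close> between by (intro cSup_least) (auto simp: L_def)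
  qed
qed

lemma dominated_graph_extension_dominated:
  assumes G: "dominated_graph S p G" and p: "sublinear_on S p" and S: "subspace S" and z: "z \<in> S"
    and lower: "\<And>x a. (x, a) \<in> G \<Longrightarrow> a - p (x - z) \<le> c"
    and upper: "\<And>y b. (y, b) \<in> G \<Longrightarrow> c \<le> p (y + z) - b"
    and xa: "(x, a) \<in> G"
  shows "a + t * c \<le> p (x + t *\<^sub>R z)"
proof -
  note GS = dominated_graphD(1)[OF G] and Gscale = dominated_graphD(4)[OF G]
  consider "t = 0" | "t > 0" | "t < 0" by linarith
  then show ?thesis
  proof cases
    case 1
    then show ?thesis using dominated_graphD(5)[OF G xa] by simp
  next
    case 2
    have "c \<le> p ((1/t) *\<^sub>R x + z) - (1/t) * a" using upper[OF Gscale[OF xa]] .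
    then have "t * c \<le> t * p ((1/t) *\<^sub>R x + z) - a"
      using 2 by (simp add: field_simps)
    also have "t * p ((1/t) *\<^sub>R x + z) = p (t *\<^sub>R ((1/t) *\<^sub>R x + z))"
      using sublinear_on_scaleR[OF p, of t] 2 GS[OF xa] z S by (simp add: subspace_add subspace_scale)
    also have "t *\<^sub>R ((1/t) *\<^sub>R x + z) = x + t *\<^sub>R z"
      using 2 by (simp add: scaleR_add_right)
    finally show ?thesis by simp
  next
    case 3
    have "(-1/t) * a - p ((-1/t) *\<^sub>R x - z) \<le> c" using lower[OF Gscale[OF xa]] .
    then have "a + t * c \<le> - t * p ((-1/t) *\<^sub>R x - z)"
      using 3 by (simp add: field_simps)
    also have "- t * p ((-1/t) *\<^sub>R x - z) = p ((- t) *\<^sub>R ((-1/t) *\<^sub>R x - z))"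
      using sublinear_on_scaleR[OF p, of "- t" "(-1/t) *\<^sub>R x - z"] 3 GS[OF xa] z S
      by (simp add: subspace_diff subspace_scale del: scaleR_minus_left mult_minus_left)
    also have "(- t) *\<^sub>R ((-1/t) *\<^sub>R x - z) = x + t *\<^sub>R z"
      using 3 by (simp add: scaleR_diff_right)
    finally show ?thesis by simp
  qed
qed

lemma dominated_graph_extend:
  assumes G: "dominated_graph S p G" and p: "sublinear_on S p" and S: "subspace S" and z: "z \<in> S"
  obtains G' c where "dominated_graph S p G'" "G \<subseteq> G'" "(z, c) \<in> G'"
proof -
  note GS = dominated_graphD(1)[OF G] and Gscale = dominated_graphD(4)[OF G]
  obtain c where lower: "\<And>x a. (x, a) \<in> G \<Longrightarrow> a - p (x - z) \<le> c"
    and upper: "\<And>y b. (y, b) \<in> G \<Longrightarrow> c \<le> p (y + z) - b"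
    using dominated_graph_extension_value[OF assms] by blast
  have dominated: "a + t * c \<le> p (x + t *\<^sub>R z)" if "(x, a) \<in> G" for x a t
    using dominated_graph_extension_dominated[OF assms, where c = c] lower upper that by blast
  define G' where "G' = {(x + t *\<^sub>R z, a + t * c) | x a t. (x, a) \<in> G}"
  have G'I: "(x + t *\<^sub>R z, a + t * c) \<in> G'" if "(x, a) \<in> G" for x a t
    unfolding G'_def using that by blast
  have G'E: "\<exists>x1 a1 t. (x1, a1) \<in> G \<and> x = x1 + t *\<^sub>R z \<and> a = a1 + t * c" if "(x, a) \<in> G'" for x a
    using that unfolding G'_def by blast
  have "dominated_graph S p G'"
    unfolding dominated_graph_def
  proof (intro conjI allI impI subsetI)
    fix w assume "w \<in> G'"
    then obtain x a t where "(x, a) \<in> G" "w = (x + t *\<^sub>R z, a + t * c)"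
      unfolding G'_def by blast
    then show "w \<in> S \<times> UNIV" using GS z by (simp add: subspace_add[OF S] subspace_scale[OF S])
  next
    show "(0, 0) \<in> G'" using G'I[OF dominated_graphD(2)[OF G], of 0] by simp
  next
    fix x a y b assume "(x, a) \<in> G'" "(y, b) \<in> G'"
    then obtain x1 a1 t1 x2 a2 t2 where 1: "(x1, a1) \<in> G" "x = x1 + t1 *\<^sub>R z" "a = a1 + t1 * c"
      and 2: "(x2, a2) \<in> G" "y = x2 + t2 *\<^sub>R z" "b = a2 + t2 * c"
      using G'E by metis
    have "((x1 + x2) + (t1 + t2) *\<^sub>R z, (a1 + a2) + (t1 + t2) * c) \<in> G'"
      using G'I[OF dominated_graphD(3)[OF G 1(1) 2(1)]] .
    then show "(x + y, a + b) \<in> G'" using 1 2 by (simp add: algebra_simps)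
  next
    fix x a d assume "(x, a) \<in> G'"
    then obtain x1 a1 t where 1: "(x1, a1) \<in> G" "x = x1 + t *\<^sub>R z" "a = a1 + t * c"
      using G'E by metis
    have "(d *\<^sub>R x1 + (d * t) *\<^sub>R z, d * a1 + (d * t) * c) \<in> G'"
      using G'I[OF Gscale[OF 1(1)]] .
    then show "(d *\<^sub>R x, d * a) \<in> G'" using 1 by (simp add: algebra_simps)
  next
    fix x a assume "(x, a) \<in> G'"
    then obtain x1 a1 t where 1: "(x1, a1) \<in> G" "x = x1 + t *\<^sub>R z" "a = a1 + t * c"
      using G'E by metis
    then show "a \<le> p x" using dominated[OF 1(1), of t] by simp
  qed
  moreover have "G \<subseteq> G'"
    using G'I[of _ _ 0] by auto
  moreover have "(z, c) \<in> G'"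
    using G'I[OF dominated_graphD(2)[OF G], of 1] by simp
  ultimately show ?thesis by (rule that)
qed

theorem hahn_banach_dominated:
  assumes S: "subspace S" and p: "sublinear_on S p"
  obtains f where "linear_on S f" "\<And>x. x \<in> S \<Longrightarrow> f x \<le> p x"
proof -
  have "\<forall>C\<in>chains {G. dominated_graph S p G}. \<exists>U\<in>{G. dominated_graph S p G}. \<forall>G\<in>C. G \<subseteq> U"
  proof
    fix C assume "C \<in> chains {G. dominated_graph S p G}"
    then show "\<exists>U\<in>{G. dominated_graph S p G}. \<forall>G\<in>C. G \<subseteq> U"
      using dominated_graph_Union_chain[OF _ S p] by (intro bexI[of _ "insert (0, 0) (\<Union>C)"]) auto
  qed
  from Zorn_Lemma2[OF this] obtain M where M: "dominated_graph S p M"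
    and maximal: "\<And>G. dominated_graph S p G \<Longrightarrow> M \<subseteq> G \<Longrightarrow> G = M"
    by blast
  have total: "\<exists>a. (z, a) \<in> M" if z: "z \<in> S" for z
  proof -
    obtain G' c where "dominated_graph S p G'" "M \<subseteq> G'" "(z, c) \<in> G'"
      using dominated_graph_extend[OF M p S z] .
    then show ?thesis using maximal by blast
  qed
  define f where "f z = (THE a. (z, a) \<in> M)" for z
  have graph: "(z, f z) \<in> M" if z: "z \<in> S" for z
  proof -
    obtain a where a: "(z, a) \<in> M" using total[OF z] ..
    then show ?thesis
      unfolding f_def by (rule theI) (use dominated_graph_single_valued[OF M p S _ a] in blast)
  qed
  have eq: "f z = a" if "z \<in> S" "(z, a) \<in> M" for z a
    using dominated_graph_single_valued[OF M p S graph[OF that(1)] that(2)] .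
  show ?thesis
  proof
    show "linear_on S f"
      unfolding linear_on_def
    proof (intro conjI ballI allI)
      show "f (x + y) = f x + f y" if "x \<in> S" "y \<in> S" for x y
        using eq[OF subspace_add[OF S that] dominated_graphD(3)[OF M graph graph]] that by blast
      show "f (c *\<^sub>R x) = c * f x" if "x \<in> S" for c x
        using eq[OF subspace_scale[OF S that] dominated_graphD(4)[OF M graph]] that by blast
    qed
    show "f x \<le> p x" if "x \<in> S" for x
      using dominated_graphD(5)[OF M graph[OF that]] .
  qed
qed

section \<open>Upper limits of bounded sequences\<close>

text \<open>Only meaningful for bounded sequences: otherwise the extended-real limsup may be
  infinite and \<open>real_of_ereal\<close> returns the junk value \<open>0\<close>.\<close>
definition limsup_real :: "(nat \<Rightarrow> real) \<Rightarrow> real" where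
  "limsup_real a = real_of_ereal (limsup (\<lambda>k. ereal (a k)))"

lemma limsup_real_bounded:
  assumes "\<And>k. \<bar>a k\<bar> \<le> B"
  shows "limsup (\<lambda>k. ereal (a k)) = ereal (limsup_real a)"
proof -
  have "- B \<le> a k" "a k \<le> B" for k
    using assms[of k] by linarith+
  then have "ereal (- B) \<le> limsup (\<lambda>k. ereal (a k))" "limsup (\<lambda>k. ereal (a k)) \<le> ereal B"
    by (auto intro!: le_Limsup Limsup_bounded always_eventually)
  then show ?thesis
    unfolding limsup_real_def by (intro ereal_real'[symmetric]) auto
qed

lemma limsup_real_add:
  assumes "\<And>k. \<bar>a k\<bar> \<le> A" "\<And>k. \<bar>b k\<bar> \<le> B"
  shows "limsup_real (\<lambda>k. a k + b k) \<le> limsup_real a + limsup_real b"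
proof -
  have "\<bar>a k + b k\<bar> \<le> A + B" for k
    using assms[of k] by linarith
  then have "ereal (limsup_real (\<lambda>k. a k + b k)) = limsup (\<lambda>k. ereal (a k) + ereal (b k))"
    using limsup_real_bounded[of "\<lambda>k. a k + b k" "A + B"] by simp
  also have "\<dots> \<le> limsup (\<lambda>k. ereal (a k)) + limsup (\<lambda>k. ereal (b k))"
    by (rule ereal_limsup_add_mono)
  also have "\<dots> = ereal (limsup_real a + limsup_real b)"
    by (simp add: limsup_real_bounded[OF assms(1)] limsup_real_bounded[OF assms(2)])
  finally show ?thesis by simp
qed

lemma limsup_real_scale:
  assumes "\<And>k. \<bar>a k\<bar> \<le> B" "0 \<le> c"
  shows "limsup_real (\<lambda>k. c * a k) = c * limsup_real a"
proof -
  have "\<bar>c * a k\<bar> \<le> c * B" for k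
    using assms by (simp add: abs_mult mult_left_mono)
  then have "ereal (limsup_real (\<lambda>k. c * a k)) = limsup (\<lambda>k. ereal c * ereal (a k))"
    using limsup_real_bounded[of "\<lambda>k. c * a k" "c * B"] by simp
  also have "\<dots> = ereal c * limsup (\<lambda>k. ereal (a k))"
    by (rule limsup_ereal_mult_left[OF assms(2)])
  also have "\<dots> = ereal (c * limsup_real a)"
    by (simp add: limsup_real_bounded[OF assms(1)])
  finally show ?thesis by simp
qed

lemma limsup_real_le:
  assumes "\<And>k. \<bar>a k\<bar> \<le> B" "eventually (\<lambda>k. a k \<le> X) sequentially"
  shows "limsup_real a \<le> X"
proof -
  have "limsup (\<lambda>k. ereal (a k)) \<le> ereal X"
    using assms(2) by (intro Limsup_bounded) (simp add: eventually_mono)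
  then show ?thesis using limsup_real_bounded[OF assms(1)] by simp
qed

lemma limsup_real_mono:
  assumes "\<And>k. \<bar>a k\<bar> \<le> A" "\<And>k. \<bar>b k\<bar> \<le> B" "\<And>k. a k \<le> b k"
  shows "limsup_real a \<le> limsup_real b"
proof -
  have "limsup (\<lambda>k. ereal (a k)) \<le> limsup (\<lambda>k. ereal (b k))"
    using assms(3) by (intro Limsup_mono) simp
  then show ?thesis using limsup_real_bounded[OF assms(1)] limsup_real_bounded[OF assms(2)] by simp
qed

section \<open>Normed subspaces, separation and minimal norms\<close>

instantiation "fun" :: (type, real_vector) real_vector
begin
definition scaleR_fun :: "real \<Rightarrow> ('a \<Rightarrow> 'b) \<Rightarrow> 'a \<Rightarrow> 'b" where
  "scaleR_fun c f = (\<lambda>x. c *\<^sub>R f x)"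
instance by standard (auto simp: scaleR_fun_def fun_eq_iff scaleR_add_right scaleR_add_left)
end

lemma scaleR_fun_apply [simp]: "(c *\<^sub>R f) x = c *\<^sub>R f x"
  by (simp add: scaleR_fun_def)

lemma convex_scaleR_sum:
  assumes "convex A" "a1 \<in> A" "a2 \<in> A" "0 \<le> t1" "0 \<le> t2"
  obtains a where "a \<in> A" "(t1 + t2) *\<^sub>R a = t1 *\<^sub>R a1 + t2 *\<^sub>R a2"
proof (cases "t1 + t2 = 0")
  case True
  then have "t1 = 0" "t2 = 0" using assms by linarith+
  then show ?thesis using assms that[of a1] by simp
next
  case False
  then have "t1 + t2 > 0" using assms by linarith
  let ?a = "(t1 / (t1 + t2)) *\<^sub>R a1 + (t2 / (t1 + t2)) *\<^sub>R a2"
  have "?a \<in> A"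
    using assms \<open>t1 + t2 > 0\<close> unfolding convex_def by (simp add: add_divide_distrib[symmetric])
  moreover have "(t1 + t2) *\<^sub>R ?a = t1 *\<^sub>R a1 + t2 *\<^sub>R a2"
    using \<open>t1 + t2 > 0\<close> by (simp add: scaleR_add_right)
  ultimately show ?thesis by (rule that)
qed

locale normed_subspace =
  fixes V :: "'a::real_vector set" and n :: "'a \<Rightarrow> real"
  assumes norm_on: "norm_on V n"
begin

lemma subspace: "subspace V"
  using norm_on unfolding norm_on_def by blast

lemma nonneg: "x \<in> V \<Longrightarrow> 0 \<le> n x"
  and eq_0_iff: "x \<in> V \<Longrightarrow> n x = 0 \<longleftrightarrow> x = 0"
  and triangle: "x \<in> V \<Longrightarrow> y \<in> V \<Longrightarrow> n (x + y) \<le> n x + n y"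
  and scaleR: "x \<in> V \<Longrightarrow> n (c *\<^sub>R x) = \<bar>c\<bar> * n x"
  using norm_on unfolding norm_on_def by simp_all

lemma zero [simp]: "n 0 = 0"
  using eq_0_iff[OF subspace_0[OF subspace]] by simp

lemma minus: "x \<in> V \<Longrightarrow> n (- x) = n x"
  using scaleR[of x "-1"] by simp

lemma commute:
  assumes "x \<in> V" "y \<in> V"
  shows "n (x - y) = n (y - x)"
proof -
  have "n (x - y) = n (- (y - x))" by simp
  also have "\<dots> = n (y - x)" by (rule minus[OF subspace_diff[OF subspace assms(2,1)]])
  finally show ?thesis .
qed

lemma tendsto_norm:
  assumes "\<And>i. xs i \<in> V" "x \<in> V" and "(\<lambda>i. n (xs i - x)) \<longlonglongrightarrow> 0"
  shows "(\<lambda>i. n (xs i)) \<longlonglongrightarrow> n x"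
proof -
  have "\<bar>n (xs i) - n x\<bar> \<le> n (xs i - x)" for i
  proof -
    have "n (xs i) \<le> n (xs i - x) + n x" "n x \<le> n (x - xs i) + n (xs i)"
      using triangle[of "xs i - x" x] triangle[of "x - xs i" "xs i"] assms(1,2)
      by (simp_all add: subspace_diff[OF subspace])
    then show ?thesis using commute[OF assms(2) assms(1)[of i]] by linarith
  qed
  then have "(\<lambda>i. n (xs i) - n x) \<longlonglongrightarrow> 0"
    by (intro Lim_null_comparison[OF _ assms(3)]) simp
  then show ?thesis by (rule LIM_zero_cancel)
qed

lemma dual_onD:
  assumes "f \<in> dual_on V n"
  shows "linear_on V f" "\<exists>K. \<forall>x\<in>V. \<bar>f x\<bar> \<le> K * n x"
  using assms unfolding dual_on_def linear_on_def by blast+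

lemma dual_on_diff:
  assumes "f \<in> dual_on V n" "x \<in> V" "y \<in> V"
  shows "f (x - y) = f x - f y"
  using dual_onD(1)[OF assms(1)] assms(2,3) subspace_neg[OF subspace]
  unfolding linear_on_def by (metis diff_conv_add_uminus scaleR_minus1_left mult_minus1)

lemma dual_on_of_bounded:
  assumes "linear_on V f" "\<And>y. y \<in> V \<Longrightarrow> \<bar>f y\<bar> \<le> n y"
  shows "(\<lambda>y. if y \<in> V then f y else 0) \<in> dual_on V n"
  using assms subspace_add[OF subspace] subspace_scale[OF subspace]
  unfolding dual_on_def linear_on_def by (auto intro!: exI[of _ 1])

lemma subspace_dual_on: "subspace (dual_on V n)"
  unfolding subspace_def
proof (intro conjI ballI allI)
  show "0 \<in> dual_on V n" unfolding dual_on_def by (auto intro: exI[of _ 0])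
next
  fix f g assume f: "f \<in> dual_on V n" and g: "g \<in> dual_on V n"
  obtain K1 K2 where "\<forall>x\<in>V. \<bar>f x\<bar> \<le> K1 * n x" "\<forall>x\<in>V. \<bar>g x\<bar> \<le> K2 * n x"
    using dual_onD(2)[OF f] dual_onD(2)[OF g] by blast
  then have "\<forall>x\<in>V. \<bar>f x + g x\<bar> \<le> (K1 + K2) * n x"
    by (smt (verit, best) distrib_right)
  then show "f + g \<in> dual_on V n"
    using f g unfolding dual_on_def by (auto simp: algebra_simps intro!: exI[of _ "K1 + K2"])
next
  fix c and f assume f: "f \<in> dual_on V n"
  obtain K where "\<forall>x\<in>V. \<bar>f x\<bar> \<le> K * n x" using dual_onD(2)[OF f] by blast
  then have "\<forall>x\<in>V. \<bar>c * f x\<bar> \<le> (\<bar>c\<bar> * K) * n x"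
    by (simp add: abs_mult mult.assoc mult_left_mono)
  then show "c *\<^sub>R f \<in> dual_on V n"
    using f unfolding dual_on_def by (auto simp: algebra_simps intro!: exI[of _ "\<bar>c\<bar> * K"])
qed

lemma bdd_above_dual_norm:
  assumes "f \<in> dual_on V n"
  shows "bdd_above {\<bar>f x\<bar> | x. x \<in> V \<and> n x \<le> 1}"
proof -
  obtain K where K: "\<forall>x\<in>V. \<bar>f x\<bar> \<le> K * n x" using dual_onD(2)[OF assms] by blast
  show ?thesis
  proof (rule bdd_aboveI)
    fix d assume "d \<in> {\<bar>f x\<bar> | x. x \<in> V \<and> n x \<le> 1}"
    then obtain x where "x \<in> V" "n x \<le> 1" "d = \<bar>f x\<bar>" by blast
    then show "d \<le> \<bar>K\<bar>"
      using K nonneg[of x] by (smt (verit) mult_left_le mult_right_mono abs_ge_self abs_ge_zero)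
  qed
qed

lemma dual_on_zero: "f \<in> dual_on V n \<Longrightarrow> f 0 = 0"
  using dual_onD(1) subspace_0[OF subspace] unfolding linear_on_def
  by (metis mult_zero_left scaleR_zero_left)

lemma dual_norm_nonneg:
  assumes "f \<in> dual_on V n"
  shows "0 \<le> dual_norm V n f"
proof -
  have "0 \<in> {\<bar>f x\<bar> | x. x \<in> V \<and> n x \<le> 1}"
    using subspace_0[OF subspace] dual_on_zero[OF assms] by force
  then show ?thesis
    unfolding dual_norm_def by (rule cSup_upper2[OF _ order_refl bdd_above_dual_norm[OF assms]])
qed

lemma dual_norm_bound:
  assumes f: "f \<in> dual_on V n" and y: "y \<in> V"
  shows "\<bar>f y\<bar> \<le> dual_norm V n f * n y"
proof (cases "n y = 0")
  case True
  then show ?thesis using eq_0_iff[OF y] dual_on_zero[OF f] by simp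
next
  case False
  then have ny: "n y > 0" using nonneg[OF y] by simp
  have "\<bar>f ((1 / n y) *\<^sub>R y)\<bar> \<le> dual_norm V n f"
    unfolding dual_norm_def
    using ny y scaleR[OF y, of "1 / n y"] subspace_scale[OF subspace y]
    by (intro cSup_upper[OF _ bdd_above_dual_norm[OF f]]) auto
  moreover have "f ((1 / n y) *\<^sub>R y) = f y / n y"
    using dual_onD(1)[OF f] y unfolding linear_on_def by simp
  ultimately show ?thesis using ny by (simp add: abs_div divide_le_eq)
qed

text \<open>For convex \<open>A\<close> with \<open>\<delta> \<le> n a\<close> on \<open>A\<close> this is a sublinear functional below \<open>n\<close>
  with value at most \<open>- \<delta>\<close> at each \<open>- a\<close>: a linear functional below it separates \<open>A\<close> from \<open>0\<close>.\<close>
definition separation_gauge :: "'a set \<Rightarrow> real \<Rightarrow> 'a \<Rightarrow> real" where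
  "separation_gauge A \<delta> y = Inf {n (y + t *\<^sub>R a) - t * \<delta> | t a. 0 \<le> t \<and> a \<in> A}"

context
  fixes A :: "'a set" and \<delta> :: real
  assumes A: "A \<subseteq> V" "convex A" "A \<noteq> {}" and far: "\<And>a. a \<in> A \<Longrightarrow> \<delta> \<le> n a"
begin

lemma separation_gauge_bdd_below:
  assumes y: "y \<in> V"
  shows "bdd_below {n (y + t *\<^sub>R a) - t * \<delta> | t a. 0 \<le> t \<and> a \<in> A}"
proof (rule bdd_belowI)
  fix e assume "e \<in> {n (y + t *\<^sub>R a) - t * \<delta> | t a. 0 \<le> t \<and> a \<in> A}"
  then obtain t a where ta: "0 \<le> t" "a \<in> A" and e: "e = n (y + t *\<^sub>R a) - t * \<delta>" by blast
  have aV: "a \<in> V" using A(1) ta(2) by blast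
  have "t * n a = n ((y + t *\<^sub>R a) + (- y))"
    using scaleR[OF aV, of t] ta(1) by simp
  also have "\<dots> \<le> n (y + t *\<^sub>R a) + n y"
    using triangle[of "y + t *\<^sub>R a" "- y"] minus[OF y] y aV
    by (simp add: subspace_add[OF subspace] subspace_scale[OF subspace] subspace_neg[OF subspace])
  finally have "t * n a \<le> n (y + t *\<^sub>R a) + n y" .
  moreover have "t * \<delta> \<le> t * n a" using far[OF ta(2)] ta(1) by (rule mult_left_mono)
  ultimately show "- n y \<le> e" using e by linarith
qed

lemma separation_gauge_le:
  "y \<in> V \<Longrightarrow> 0 \<le> t \<Longrightarrow> a \<in> A \<Longrightarrow> separation_gauge A \<delta> y \<le> n (y + t *\<^sub>R a) - t * \<delta>"
  unfolding separation_gauge_def by (rule cInf_lower) (auto intro: separation_gauge_bdd_below)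

lemma separation_gauge_greatest:
  assumes "\<And>t a. 0 \<le> t \<Longrightarrow> a \<in> A \<Longrightarrow> X \<le> n (y + t *\<^sub>R a) - t * \<delta>"
  shows "X \<le> separation_gauge A \<delta> y"
proof -
  obtain a where "a \<in> A" using A(3) by blast
  then have "n (y + 0 *\<^sub>R a) - 0 * \<delta> \<in> {n (y + t *\<^sub>R a) - t * \<delta> | t a. 0 \<le> t \<and> a \<in> A}"
    by blast
  then show ?thesis
    unfolding separation_gauge_def using assms by (intro cInf_greatest) auto
qed

lemma separation_gauge_le_norm: "y \<in> V \<Longrightarrow> separation_gauge A \<delta> y \<le> n y"
  using separation_gauge_le[of y 0] A(3) by auto

lemma separation_gauge_subadditive:
  assumes y1: "y1 \<in> V" and y2: "y2 \<in> V"
  shows "separation_gauge A \<delta> (y1 + y2) \<le> separation_gauge A \<delta> y1 + separation_gauge A \<delta> y2"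
proof -
  have key: "separation_gauge A \<delta> (y1 + y2) \<le> (n (y1 + t1 *\<^sub>R a1) - t1 * \<delta>) + (n (y2 + t2 *\<^sub>R a2) - t2 * \<delta>)"
    if ta: "0 \<le> t1" "a1 \<in> A" "0 \<le> t2" "a2 \<in> A" for t1 a1 t2 a2
  proof -
    obtain a where a: "a \<in> A" and sum: "(t1 + t2) *\<^sub>R a = t1 *\<^sub>R a1 + t2 *\<^sub>R a2"
      using convex_scaleR_sum[OF A(2) ta(2,4,1,3)] .
    have V: "y1 + t1 *\<^sub>R a1 \<in> V" "y2 + t2 *\<^sub>R a2 \<in> V"
      using A(1) ta y1 y2 by (auto intro!: subspace_add[OF subspace] subspace_scale[OF subspace])
    have "separation_gauge A \<delta> (y1 + y2) \<le> n ((y1 + y2) + (t1 + t2) *\<^sub>R a) - (t1 + t2) * \<delta>"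
      using separation_gauge_le[OF subspace_add[OF subspace y1 y2] _ a] ta by simp
    also have "(y1 + y2) + (t1 + t2) *\<^sub>R a = (y1 + t1 *\<^sub>R a1) + (y2 + t2 *\<^sub>R a2)"
      using sum by (simp add: algebra_simps)
    also have "n \<dots> \<le> n (y1 + t1 *\<^sub>R a1) + n (y2 + t2 *\<^sub>R a2)"
      using triangle[OF V] .
    finally show ?thesis by (simp add: algebra_simps)
  qed
  have step: "separation_gauge A \<delta> (y1 + y2) - (n (y2 + t2 *\<^sub>R a2) - t2 * \<delta>) \<le> separation_gauge A \<delta> y1"
    if t2: "0 \<le> t2" "a2 \<in> A" for t2 a2
  proof (rule separation_gauge_greatest)
    fix t1 :: real and a1 assume "0 \<le> t1" "a1 \<in> A"
    then show "separation_gauge A \<delta> (y1 + y2) - (n (y2 + t2 *\<^sub>R a2) - t2 * \<delta>) \<le> n (y1 + t1 *\<^sub>R a1) - t1 * \<delta>"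
      using key[OF _ _ t2] by fastforce
  qed
  have "separation_gauge A \<delta> (y1 + y2) - separation_gauge A \<delta> y1 \<le> separation_gauge A \<delta> y2"
  proof (rule separation_gauge_greatest)
    fix t2 :: real and a2 assume "0 \<le> t2" "a2 \<in> A"
    then show "separation_gauge A \<delta> (y1 + y2) - separation_gauge A \<delta> y1 \<le> n (y2 + t2 *\<^sub>R a2) - t2 * \<delta>"
      using step by fastforce
  qed
  then show ?thesis by simp
qed

lemma separation_gauge_zero: "separation_gauge A \<delta> 0 = 0"
proof (rule antisym)
  show "separation_gauge A \<delta> 0 \<le> 0" using separation_gauge_le_norm[OF subspace_0[OF subspace]] by simp
  show "0 \<le> separation_gauge A \<delta> 0"
  proof (rule separation_gauge_greatest)
    fix t :: real and a assume "0 \<le> t" "a \<in> A"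
    then have "t * \<delta> \<le> t * n a" using far by (simp add: mult_left_mono)
    also have "\<dots> = n (0 + t *\<^sub>R a)" using scaleR[of a t] A(1) \<open>0 \<le> t\<close> \<open>a \<in> A\<close> by auto
    finally show "0 \<le> n (0 + t *\<^sub>R a) - t * \<delta>" by simp
  qed
qed

lemma separation_gauge_scaleR:
  assumes c: "0 \<le> c" and y: "y \<in> V"
  shows "separation_gauge A \<delta> (c *\<^sub>R y) = c * separation_gauge A \<delta> y"
proof (cases "c = 0")
  case True
  then show ?thesis using separation_gauge_zero by simp
next
  case False
  with c have c: "c > 0" by simp
  have scale: "n (c *\<^sub>R y + (c * t) *\<^sub>R a) - (c * t) * \<delta> = c * (n (y + t *\<^sub>R a) - t * \<delta>)"
    if "a \<in> A" for t :: real and a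
  proof -
    have "c *\<^sub>R y + (c * t) *\<^sub>R a = c *\<^sub>R (y + t *\<^sub>R a)" by (simp add: scaleR_add_right)
    then show ?thesis
      using scaleR[of "y + t *\<^sub>R a" c] c A(1) that y
      by (simp add: subspace_add[OF subspace] subspace_scale[OF subspace] subset_iff algebra_simps)
  qed
  show ?thesis
  proof (rule antisym)
    have "separation_gauge A \<delta> (c *\<^sub>R y) / c \<le> separation_gauge A \<delta> y"
    proof (rule separation_gauge_greatest)
      fix t :: real and a assume "0 \<le> t" "a \<in> A"
      then have "separation_gauge A \<delta> (c *\<^sub>R y) \<le> c * (n (y + t *\<^sub>R a) - t * \<delta>)"
        using separation_gauge_le[OF subspace_scale[OF subspace y, of c] _ \<open>a \<in> A\<close>, of "c * t"] c scale[OF \<open>a \<in> A\<close>, of t]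
        by (simp add: mult_nonneg_nonneg)
      then show "separation_gauge A \<delta> (c *\<^sub>R y) / c \<le> n (y + t *\<^sub>R a) - t * \<delta>"
        using c by (simp add: divide_le_eq mult.commute)
    qed
    then show "separation_gauge A \<delta> (c *\<^sub>R y) \<le> c * separation_gauge A \<delta> y" using c by (simp add: divide_le_eq mult.commute)
    show "c * separation_gauge A \<delta> y \<le> separation_gauge A \<delta> (c *\<^sub>R y)"
    proof (rule separation_gauge_greatest)
      fix t :: real and a assume t: "0 \<le> t" and a: "a \<in> A"
      have "c * separation_gauge A \<delta> y \<le> c * (n (y + (t / c) *\<^sub>R a) - (t / c) * \<delta>)"
        using separation_gauge_le[OF y _ a, of "t / c"] t c by simp
      also have "\<dots> = n (c *\<^sub>R y + t *\<^sub>R a) - t * \<delta>"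
        using scale[OF a, of "t / c"] c by simp
      finally show "c * separation_gauge A \<delta> y \<le> n (c *\<^sub>R y + t *\<^sub>R a) - t * \<delta>" .
    qed
  qed
qed

lemma sublinear_on_separation_gauge: "sublinear_on V (separation_gauge A \<delta>)"
  unfolding sublinear_on_def using separation_gauge_subadditive separation_gauge_scaleR by blast

lemma separating_functional:
  obtains f where "f \<in> dual_on V n" "\<And>y. y \<in> V \<Longrightarrow> \<bar>f y\<bar> \<le> n y" "\<And>a. a \<in> A \<Longrightarrow> \<delta> \<le> f a"
proof -
  obtain f where f: "linear_on V f" and dominated: "\<And>y. y \<in> V \<Longrightarrow> f y \<le> separation_gauge A \<delta> y"
    using hahn_banach_dominated[OF subspace sublinear_on_separation_gauge] by blast
  have neg: "f (- y) = - f y" if "y \<in> V" for y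
    using f that unfolding linear_on_def by (metis scaleR_minus1_left mult_minus1)
  have le_norm: "f y \<le> n y" if "y \<in> V" for y
    using dominated[OF that] separation_gauge_le_norm[OF that] by linarith
  have bounded: "\<bar>f y\<bar> \<le> n y" if y: "y \<in> V" for y
    using le_norm[OF y] le_norm[OF subspace_neg[OF subspace y]] neg[OF y] minus[OF y] by linarith
  have "\<delta> \<le> f a" if a: "a \<in> A" for a
  proof -
    have aV: "a \<in> V" using A(1) a by blast
    have "separation_gauge A \<delta> (- a) \<le> n (- a + 1 *\<^sub>R a) - 1 * \<delta>"
      using separation_gauge_le[OF subspace_neg[OF subspace aV] _ a, of 1] by simp
    then have "f (- a) \<le> - \<delta>" using dominated[OF subspace_neg[OF subspace aV]] by simp
    then show ?thesis using neg[OF aV] by simp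
  qed
  then show ?thesis
    using that[of "\<lambda>y. if y \<in> V then f y else 0"] dual_on_of_bounded[OF f bounded] bounded A(1)
    by (auto simp: subset_iff)
qed

end

lemma norming_functional:
  assumes x: "x \<in> V"
  obtains f where "f \<in> dual_on V n" "\<And>y. y \<in> V \<Longrightarrow> \<bar>f y\<bar> \<le> n y" "f x = n x"
proof -
  obtain f where "f \<in> dual_on V n" "\<And>y. y \<in> V \<Longrightarrow> \<bar>f y\<bar> \<le> n y" "n x \<le> f x"
    using separating_functional[of "{x}" "n x"] x by auto
  moreover have "f x \<le> n x" using calculation(2)[OF x] by linarith
  ultimately show ?thesis using that by (meson antisym)
qed

lemma dual_on_bounded_seq:
  assumes "h \<in> dual_on V n" "\<And>k. xs k \<in> V" "\<And>k. n (xs k) \<le> M"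
  shows "\<bar>h (xs k)\<bar> \<le> dual_norm V n h * M"
  using dual_norm_bound[OF assms(1,2)] dual_norm_nonneg[OF assms(1)] assms(3)
  by (meson mult_left_mono order_trans)

lemma sublinear_on_dual_limsup:
  assumes "\<And>k. xs k \<in> V" "\<And>k. n (xs k) \<le> M"
  shows "sublinear_on (dual_on V n) (\<lambda>h. limsup_real (\<lambda>k. h (xs k)))"
  unfolding sublinear_on_def
proof (intro conjI ballI allI impI)
  have bounded: "\<bar>h (xs k)\<bar> \<le> dual_norm V n h * M" if "h \<in> dual_on V n" for h k
    using dual_on_bounded_seq[where xs = xs, OF that assms] .
  fix h g assume "h \<in> dual_on V n" "g \<in> dual_on V n"
  then show "limsup_real (\<lambda>k. (h + g) (xs k)) \<le> limsup_real (\<lambda>k. h (xs k)) + limsup_real (\<lambda>k. g (xs k))"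
    using limsup_real_add[OF bounded bounded] by simp
next
  have bounded: "\<bar>h (xs k)\<bar> \<le> dual_norm V n h * M" if "h \<in> dual_on V n" for h k
    using dual_on_bounded_seq[where xs = xs, OF that assms] .
  fix c :: real and h assume "0 \<le> c" "h \<in> dual_on V n"
  then show "limsup_real (\<lambda>k. (c *\<^sub>R h) (xs k)) = c * limsup_real (\<lambda>k. h (xs k))"
    using limsup_real_scale[OF bounded] by simp
qed

text \<open>The point represents, by reflexivity, a Hahn--Banach functional on the dual that is
  dominated by \<open>h \<mapsto> limsup h (xs k)\<close>; it plays the role of a weak cluster point.\<close>
lemma reflexive_limsup_point:
  assumes refl: "reflexive_on V n" and xs: "\<And>k. xs k \<in> V" "\<And>k. n (xs k) \<le> M"
  obtains x where "x \<in> V" "\<And>f. f \<in> dual_on V n \<Longrightarrow> f x \<le> limsup_real (\<lambda>k. f (xs k))"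
proof -
  define D where "D = dual_on V n"
  define p where "p h = limsup_real (\<lambda>k. h (xs k))" for h :: "'a \<Rightarrow> real"
  have bounded: "\<bar>h (xs k)\<bar> \<le> dual_norm V n h * M" if "h \<in> D" for h k
    using dual_on_bounded_seq[where xs = xs, OF _ xs] that unfolding D_def by blast
  obtain \<Phi> where \<Phi>: "linear_on D \<Phi>" and below: "\<And>h. h \<in> D \<Longrightarrow> \<Phi> h \<le> p h"
    using hahn_banach_dominated[OF subspace_dual_on sublinear_on_dual_limsup[where xs = xs, OF xs]]
    unfolding D_def p_def by blast
  have p_bound: "p h \<le> dual_norm V n h * M" if "h \<in> D" for h
    unfolding p_def using bounded[OF that] by (intro limsup_real_le always_eventually) (auto simp: abs_le_iff)
  have "\<bar>\<Phi> h\<bar> \<le> M * dual_norm V n h" if h: "h \<in> D" for h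
  proof -
    have "- h \<in> D" using subspace_neg[OF subspace_dual_on] h unfolding D_def .
    moreover have "\<Phi> ((-1) *\<^sub>R h) = (-1) * \<Phi> h"
      using \<Phi> h unfolding linear_on_def by blast
    moreover have "p (- h) \<le> dual_norm V n h * M"
      unfolding p_def using bounded[OF h] by (intro limsup_real_le always_eventually) (auto simp: abs_le_iff)
    ultimately have "- \<Phi> h \<le> dual_norm V n h * M"
      using below[of "- h"] by simp
    moreover have "\<Phi> h \<le> dual_norm V n h * M" using below[OF h] p_bound[OF h] by linarith
    ultimately show ?thesis by (simp add: abs_le_iff mult.commute)
  qed
  moreover have "\<Phi> (\<lambda>x. f x + h x) = \<Phi> f + \<Phi> h" if "f \<in> D" "h \<in> D" for f h
  proof -
    have "(\<lambda>x. f x + h x) = f + h" by (simp add: fun_eq_iff)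
    then show ?thesis using \<Phi> that unfolding linear_on_def by simp
  qed
  moreover have "\<Phi> (\<lambda>x. c * f x) = c * \<Phi> f" if "f \<in> D" for f c
  proof -
    have "(\<lambda>x. c * f x) = c *\<^sub>R f" by (simp add: fun_eq_iff)
    then show ?thesis using \<Phi> that unfolding linear_on_def by simp
  qed
  ultimately obtain x where x: "x \<in> V" "\<And>f. f \<in> D \<Longrightarrow> \<Phi> f = f x"
    using refl unfolding reflexive_on_def D_def by blast
  show ?thesis
  proof (rule that[OF x(1)])
    show "f x \<le> limsup_real (\<lambda>k. f (xs k))" if "f \<in> dual_on V n" for f
      using below[of f] x(2)[of f] that unfolding p_def D_def by simp
  qed
qed

definition seq_closed :: "'a set \<Rightarrow> bool" where
  "seq_closed G \<longleftrightarrow> (\<forall>x gs. x \<in> V \<and> (\<forall>i. gs i \<in> G) \<and> (\<lambda>i. n (x - gs i)) \<longlonglongrightarrow> 0 \<longrightarrow> x \<in> G)"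

lemma positive_distance_from_closed:
  assumes closed: "seq_closed G"
    and GV: "G \<subseteq> V" and x: "x \<in> V" "x \<notin> G"
  obtains \<delta> where "\<delta> > 0" "\<And>g. g \<in> G \<Longrightarrow> \<delta> \<le> n (g - x)"
proof (rule ccontr)
  assume "\<not> thesis"
  then have "\<exists>g\<in>G. n (g - x) < 1 / real (Suc k)" for k
    using that[of "1 / real (Suc k)"] by force
  then obtain gs where gs: "\<And>k. gs k \<in> G" "\<And>k. n (gs k - x) < 1 / real (Suc k)"
    by metis
  have "(\<lambda>k. n (x - gs k)) \<longlonglongrightarrow> 0"
  proof (rule Lim_null_comparison[OF _ LIMSEQ_Suc[OF lim_inverse_n']])
    show "\<forall>\<^sub>F k in sequentially. norm (n (x - gs k)) \<le> 1 / real (Suc k)"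
      using gs GV x commute nonneg subspace_diff[OF subspace]
      by (intro always_eventually allI) (smt (verit, best) real_norm_def subsetD)
  qed
  then show False using closed x gs(1) unfolding seq_closed_def by blast
qed

text \<open>Otherwise the negation of a functional separating \<open>x\<close> from \<open>G\<close> violates the
  hypothesis on \<open>x\<close>.\<close>
lemma limsup_point_mem_closed_convex:
  assumes closed: "seq_closed G"
    and GV: "G \<subseteq> V" and G: "convex G"
    and xs: "\<And>k. xs k \<in> G" "\<And>k. n (xs k) \<le> M"
    and x: "x \<in> V" "\<And>f. f \<in> dual_on V n \<Longrightarrow> f x \<le> limsup_real (\<lambda>k. f (xs k))"
  shows "x \<in> G"
proof (rule ccontr)
  assume "x \<notin> G"
  then obtain \<delta> where \<delta>: "\<delta> > 0" "\<And>g. g \<in> G \<Longrightarrow> \<delta> \<le> n (g - x)"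
    using positive_distance_from_closed[OF closed GV x(1)] by blast
  let ?A = "(\<lambda>g. g - x) ` G"
  have "?A \<subseteq> V" using GV x(1) subspace_diff[OF subspace] by blast
  moreover have "convex ?A" using G by (rule convex_translation_subtract)
  moreover have "?A \<noteq> {}" using xs(1) by blast
  ultimately obtain f where f: "f \<in> dual_on V n" "\<And>y. y \<in> V \<Longrightarrow> \<bar>f y\<bar> \<le> n y"
    and sep: "\<And>a. a \<in> ?A \<Longrightarrow> \<delta> \<le> f a"
    using separating_functional[of ?A \<delta>] \<delta>(2) by blast
  have xsV: "xs k \<in> V" for k using xs(1) GV by blast
  have sep': "f x + \<delta> \<le> f (xs k)" for k
    using sep[of "xs k - x"] xs(1) dual_on_diff[OF f(1) xsV x(1)] by force
  have "- f \<in> dual_on V n" using subspace_neg[OF subspace_dual_on f(1)] .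
  then have "- f x \<le> limsup_real (\<lambda>k. - f (xs k))" using x(2) by fastforce
  also have "\<dots> \<le> - (f x + \<delta>)"
  proof (rule limsup_real_le)
    show "\<bar>- f (xs k)\<bar> \<le> M" for k using order_trans[OF f(2)[OF xsV[of k]] xs(2)[of k]] by simp
    show "\<forall>\<^sub>F k in sequentially. - f (xs k) \<le> - (f x + \<delta>)"
      using sep' by (intro always_eventually) (meson neg_le_iff_le)
  qed
  finally show False using \<delta>(1) by simp
qed

text \<open>The norm is weakly lower semicontinuous, seen through a norming functional.\<close>
lemma limsup_point_norm_le:
  assumes xs: "\<And>k. xs k \<in> V" "\<And>k. n (xs k) \<le> M"
    and x: "x \<in> V" "\<And>f. f \<in> dual_on V n \<Longrightarrow> f x \<le> limsup_real (\<lambda>k. f (xs k))"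
  shows "n x \<le> limsup_real (\<lambda>k. n (xs k))"
proof -
  obtain f where f: "f \<in> dual_on V n" "\<And>y. y \<in> V \<Longrightarrow> \<bar>f y\<bar> \<le> n y" "f x = n x"
    using norming_functional[OF x(1)] by blast
  have "n x \<le> limsup_real (\<lambda>k. f (xs k))" using x(2)[OF f(1)] f(3) by simp
  also have "\<dots> \<le> limsup_real (\<lambda>k. n (xs k))"
    using f(2)[OF xs(1)] xs nonneg[OF xs(1)]
    by (intro limsup_real_mono[where A = M and B = M]) (auto simp: abs_le_iff intro: order_trans)
  finally show ?thesis .
qed

lemma minimizing_sequence:
  assumes GV: "G \<subseteq> V" and G: "G \<noteq> {}"
  obtains gs where "\<And>k. gs k \<in> G" "\<And>k. n (gs k) \<le> Inf (n ` G) + 1"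
    "limsup_real (\<lambda>k. n (gs k)) \<le> Inf (n ` G)"
proof -
  define d where "d = Inf (n ` G)"
  have bdd: "bdd_below (n ` G)" by (rule bdd_belowI2[where m = 0]) (use GV nonneg in auto)
  have "\<exists>g\<in>G. n g < d + 1 / real (Suc k)" for k
    using cInf_less_iff[OF _ bdd, of "d + 1 / real (Suc k)"] G unfolding d_def by simp
  then obtain gs where gs: "\<And>k. gs k \<in> G" "\<And>k. n (gs k) < d + 1 / real (Suc k)"
    by metis
  have gsV: "gs k \<in> V" for k using gs(1) GV by blast
  have gs_bound: "n (gs k) \<le> d + 1" for k
  proof -
    have "1 / real (Suc k) \<le> 1" by simp
    then show ?thesis using gs(2)[of k] by linarith
  qed
  have "limsup_real (\<lambda>k. n (gs k)) \<le> d"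
  proof (rule field_le_epsilon)
    fix e :: real assume "e > 0"
    then obtain N where N: "1 / real (Suc N) < e"
      by (metis nat_approx_posE)
    show "limsup_real (\<lambda>k. n (gs k)) \<le> d + e"
    proof (rule limsup_real_le)
      show "\<bar>n (gs k)\<bar> \<le> d + 1" for k using gs_bound[of k] nonneg[OF gsV] by simp
      have "n (gs k) \<le> d + e" if "k \<ge> N" for k
      proof -
        have "1 / real (Suc k) \<le> 1 / real (Suc N)" using that by (simp add: frac_le)
        then show ?thesis using gs(2)[of k] N by linarith
      qed
      then show "\<forall>\<^sub>F k in sequentially. n (gs k) \<le> d + e"
        by (rule eventually_sequentiallyI)
    qed
  qed
  then show ?thesis using that gs(1) gs_bound unfolding d_def by blast
qed

theorem min_norm_exists:
  assumes refl: "reflexive_on V n" and GV: "G \<subseteq> V" and G: "convex G" "G \<noteq> {}"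
    and closed: "seq_closed G"
  obtains x where "x \<in> G" "\<And>g. g \<in> G \<Longrightarrow> n x \<le> n g"
proof -
  obtain gs where gs: "\<And>k. gs k \<in> G" "\<And>k. n (gs k) \<le> Inf (n ` G) + 1"
    and limsup: "limsup_real (\<lambda>k. n (gs k)) \<le> Inf (n ` G)"
    using minimizing_sequence[OF GV G(2)] by blast
  have gsV: "gs k \<in> V" for k using gs(1) GV by blast
  obtain x where x: "x \<in> V" "\<And>f. f \<in> dual_on V n \<Longrightarrow> f x \<le> limsup_real (\<lambda>k. f (gs k))"
    using reflexive_limsup_point[where xs = gs, OF refl gsV gs(2)] by blast
  show ?thesis
  proof (rule that)
    show "x \<in> G"
      using limsup_point_mem_closed_convex[where xs = gs, OF closed GV G(1) gs x] .
    have "n x \<le> Inf (n ` G)"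
      using limsup_point_norm_le[where xs = gs, OF gsV gs(2) x] limsup by linarith
    moreover have "Inf (n ` G) \<le> n g" if "g \<in> G" for g
      using that GV nonneg by (intro cInf_lower imageI bdd_belowI2[where m = 0]) auto
    ultimately show "n x \<le> n g" if "g \<in> G" for g using that by force
  qed
qed

theorem min_norm_unique:
  assumes sc: "strictly_convex_on V n" and GV: "G \<subseteq> V" and G: "convex G"
    and x: "x \<in> G" "\<And>g. g \<in> G \<Longrightarrow> n x \<le> n g" and y: "y \<in> G" "\<And>g. g \<in> G \<Longrightarrow> n y \<le> n g"
  shows "x = y"
proof (rule ccontr)
  assume "x \<noteq> y"
  have xV: "x \<in> V" and yV: "y \<in> V" using GV x(1) y(1) by blast+
  define d where "d = n x"
  have ny: "n y = d" using x y unfolding d_def by (meson antisym)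
  define m where "m = (1/2) *\<^sub>R (x + y)"
  have "m \<in> G" using convexD[OF G x(1) y(1), of "1/2" "1/2"] unfolding m_def by (simp add: scaleR_add_right)
  then have dm: "d \<le> n m" using x(2) unfolding d_def by blast
  have "d > 0"
    using \<open>x \<noteq> y\<close> eq_0_iff[OF xV] eq_0_iff[OF yV] nonneg[OF xV] ny unfolding d_def by force
  have unit: "(1/d) *\<^sub>R x \<in> V" "(1/d) *\<^sub>R y \<in> V" "n ((1/d) *\<^sub>R x) = 1" "n ((1/d) *\<^sub>R y) = 1"
    using \<open>d > 0\<close> xV yV subspace_scale[OF subspace] scaleR[OF xV] scaleR[OF yV] ny
    by (auto simp: d_def)
  moreover have "(1/d) *\<^sub>R x \<noteq> (1/d) *\<^sub>R y" using \<open>x \<noteq> y\<close> \<open>d > 0\<close> by simp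
  ultimately have "n ((1/2) *\<^sub>R ((1/d) *\<^sub>R x + (1/d) *\<^sub>R y)) < 1"
    using sc unfolding strictly_convex_on_def by blast
  moreover have "(1/2) *\<^sub>R ((1/d) *\<^sub>R x + (1/d) *\<^sub>R y) = (1/d) *\<^sub>R m"
    unfolding m_def by (simp add: scaleR_add_right ac_simps)
  moreover have "n ((1/d) *\<^sub>R m) = n m / d"
    using scaleR[of m "1/d"] \<open>m \<in> G\<close> GV \<open>d > 0\<close> by auto
  ultimately show False using dm \<open>d > 0\<close> by (simp add: divide_less_eq)
qed

end

section \<open>Minimal gradients\<close>

lemma gradient_relation_add: "gradient_relation R \<Longrightarrow> (u, g) \<in> R \<Longrightarrow> (u', g') \<in> R \<Longrightarrow> (u + u', g + g') \<in> R"
  and gradient_relation_scaleR: "gradient_relation R \<Longrightarrow> (u, g) \<in> R \<Longrightarrow> 0 < \<alpha> \<Longrightarrow> (\<alpha> *\<^sub>R u, \<alpha> *\<^sub>R g) \<in> R"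
  unfolding gradient_relation_def by blast+

lemma gradient_spaceD:
  assumes "gradient_space V nV W nW R"
  shows "gradient_relation R" "normed_subspace V nV" "normed_subspace W nW"
    "reflexive_on W nW" "strictly_convex_on W nW"
    "\<And>u g us gs. u \<in> V \<Longrightarrow> g \<in> W \<Longrightarrow> \<forall>i. us i \<in> V \<and> gs i \<in> W \<and> (us i, gs i) \<in> R \<Longrightarrow>
       (\<lambda>i. nV (u - us i)) \<longlonglongrightarrow> 0 \<Longrightarrow> (\<lambda>i. nW (g - gs i)) \<longlonglongrightarrow> 0 \<Longrightarrow> (u, g) \<in> R"
  using assms unfolding gradient_space_def banach_on_def normed_subspace_def by blast+

definition gradients :: "'b::real_vector set \<Rightarrow> ('a::real_vector \<times> 'b) set \<Rightarrow> 'a \<Rightarrow> 'b set" where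
  "gradients W R u = {g \<in> W. (u, g) \<in> R}"

definition is_min_grad :: "'b::real_vector set \<Rightarrow> ('b \<Rightarrow> real) \<Rightarrow> ('a::real_vector \<times> 'b) set \<Rightarrow> 'a \<Rightarrow> 'b \<Rightarrow> bool" where
  "is_min_grad W nW R u g \<longleftrightarrow> g \<in> gradients W R u \<and> (\<forall>g'\<in>gradients W R u. nW g \<le> nW g')"

lemma min_grad_eq_The: "min_grad W nW R u = (THE g. is_min_grad W nW R u g)"
  unfolding min_grad_def is_min_grad_def gradients_def by (intro arg_cong[where f = The] ext) auto

lemma convex_gradients:
  assumes R: "gradient_relation R" and W: "subspace W"
  shows "convex (gradients W R u)"
proof (rule convexI)
  fix g1 g2 and a b :: real
  assume g: "g1 \<in> gradients W R u" "g2 \<in> gradients W R u" and ab: "0 \<le> a" "0 \<le> b" "a + b = 1"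
  have "a *\<^sub>R g1 + b *\<^sub>R g2 \<in> W"
    using g W unfolding gradients_def by (auto intro!: subspace_add subspace_scale)
  moreover have "(u, a *\<^sub>R g1 + b *\<^sub>R g2) \<in> R"
  proof (cases "a = 0 \<or> b = 0")
    case True
    then show ?thesis using g ab unfolding gradients_def by auto
  next
    case False
    with ab have "0 < a" "0 < b" by auto
    then have "(a *\<^sub>R u + b *\<^sub>R u, a *\<^sub>R g1 + b *\<^sub>R g2) \<in> R"
      using g unfolding gradients_def
      by (intro gradient_relation_add[OF R] gradient_relation_scaleR[OF R]) auto
    then show ?thesis using ab by (simp add: scaleR_add_left[symmetric])
  qed
  ultimately show "a *\<^sub>R g1 + b *\<^sub>R g2 \<in> gradients W R u" unfolding gradients_def by blast
qed

context
  fixes V nV W nW R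
  assumes gs: "gradient_space V nV W nW R"
begin

interpretation V: normed_subspace V nV using gradient_spaceD(2)[OF gs] .
interpretation W: normed_subspace W nW using gradient_spaceD(3)[OF gs] .

lemma seq_closed_gradients:
  assumes "u \<in> V"
  shows "W.seq_closed (gradients W R u)"
  unfolding W.seq_closed_def
proof (intro allI impI)
  fix g gs assume "g \<in> W \<and> (\<forall>i. gs i \<in> gradients W R u) \<and> (\<lambda>i. nW (g - gs i)) \<longlonglongrightarrow> 0"
  then show "g \<in> gradients W R u"
    using gradient_spaceD(6)[OF gs assms, of g "\<lambda>_. u" gs] assms unfolding gradients_def by simp
qed

lemma is_min_grad_min_grad:
  assumes u: "u \<in> Sob V W R"
  shows "is_min_grad W nW R u (min_grad W nW R u)"
proof -
  have uV: "u \<in> V" using u unfolding Sob_def by blast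
  have sub: "gradients W R u \<subseteq> W" unfolding gradients_def by blast
  have conv: "convex (gradients W R u)"
    using convex_gradients[OF gradient_spaceD(1)[OF gs] W.subspace] .
  obtain g where g: "is_min_grad W nW R u g"
  proof (rule W.min_norm_exists[OF gradient_spaceD(4)[OF gs] sub conv _ seq_closed_gradients[OF uV]])
    show "gradients W R u \<noteq> {}" using u unfolding Sob_def gradients_def by blast
  qed (auto simp: is_min_grad_def intro: that)
  have "is_min_grad W nW R u g' \<Longrightarrow> g' = g" for g'
    using W.min_norm_unique[OF gradient_spaceD(5)[OF gs] sub conv] g unfolding is_min_grad_def by blast
  then show ?thesis using g unfolding min_grad_eq_The by (metis theI)
qed

lemma min_grad_in_W: "u \<in> Sob V W R \<Longrightarrow> min_grad W nW R u \<in> W"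
  using is_min_grad_min_grad unfolding is_min_grad_def gradients_def by blast

lemma min_grad_eqI:
  assumes "u \<in> Sob V W R" "is_min_grad W nW R u g"
  shows "min_grad W nW R u = g"
  using W.min_norm_unique[OF gradient_spaceD(5)[OF gs] _ convex_gradients[OF gradient_spaceD(1)[OF gs] W.subspace]]
    is_min_grad_min_grad[OF assms(1)] assms(2)
  unfolding is_min_grad_def gradients_def by blast

lemma min_grad_scaleR:
  assumes u: "u \<in> Sob V W R" and \<alpha>: "0 < \<alpha>"
  shows "\<alpha> *\<^sub>R u \<in> Sob V W R" "min_grad W nW R (\<alpha> *\<^sub>R u) = \<alpha> *\<^sub>R min_grad W nW R u"
proof -
  note R = gradient_spaceD(1)[OF gs]
  have scale_gradients: "\<beta> *\<^sub>R g \<in> gradients W R (\<beta> *\<^sub>R v)" if "g \<in> gradients W R v" "0 < \<beta>" for g v \<beta>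
    using that gradient_relation_scaleR[OF R] subspace_scale[OF W.subspace] unfolding gradients_def by blast
  define g where "g = min_grad W nW R u"
  have g: "is_min_grad W nW R u g" unfolding g_def by (rule is_min_grad_min_grad[OF u])
  show \<alpha>u: "\<alpha> *\<^sub>R u \<in> Sob V W R"
    using u g scale_gradients[OF _ \<alpha>] subspace_scale[OF V.subspace]
    unfolding Sob_def is_min_grad_def gradients_def by blast
  have "is_min_grad W nW R (\<alpha> *\<^sub>R u) (\<alpha> *\<^sub>R g)"
    unfolding is_min_grad_def
  proof (intro conjI ballI)
    show "\<alpha> *\<^sub>R g \<in> gradients W R (\<alpha> *\<^sub>R u)" using g \<alpha> scale_gradients unfolding is_min_grad_def by blast
    fix g' assume g': "g' \<in> gradients W R (\<alpha> *\<^sub>R u)"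
    then have "(1 / \<alpha>) *\<^sub>R g' \<in> gradients W R u" using scale_gradients[OF g', of "1 / \<alpha>"] \<alpha> by simp
    then have "nW g \<le> nW ((1 / \<alpha>) *\<^sub>R g')" using g unfolding is_min_grad_def by blast
    also have "\<dots> = nW g' / \<alpha>" using W.scaleR g' \<alpha> unfolding gradients_def by simp
    finally show "nW (\<alpha> *\<^sub>R g) \<le> nW g'"
      using W.scaleR g \<alpha> unfolding is_min_grad_def gradients_def by (simp add: le_divide_eq mult.commute)
  qed
  then show "min_grad W nW R (\<alpha> *\<^sub>R u) = \<alpha> *\<^sub>R min_grad W nW R u"
    unfolding g_def by (rule min_grad_eqI[OF \<alpha>u])
qed

lemma min_grad_eq_0_if_limit:
  assumes us: "\<And>i. us i \<in> Sob V W R" and u: "u \<in> Sob V W R"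
    and lim: "(\<lambda>i. nV (us i - u)) \<longlonglongrightarrow> 0" and grad: "(\<lambda>i. nW (min_grad W nW R (us i))) \<longlonglongrightarrow> 0"
  shows "min_grad W nW R u = 0"
proof (rule min_grad_eqI[OF u])
  have mg: "is_min_grad W nW R (us i) (min_grad W nW R (us i))" for i
    by (rule is_min_grad_min_grad[OF us])
  have usV: "us i \<in> V" for i using us unfolding Sob_def by blast
  have uV: "u \<in> V" using u unfolding Sob_def by blast
  have mgW: "min_grad W nW R (us i) \<in> W" for i by (rule min_grad_in_W[OF us])
  have "(u, 0) \<in> R"
  proof (rule gradient_spaceD(6)[OF gs uV subspace_0[OF W.subspace]])
    show "\<forall>i. us i \<in> V \<and> min_grad W nW R (us i) \<in> W \<and> (us i, min_grad W nW R (us i)) \<in> R"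
      using usV mg unfolding is_min_grad_def gradients_def by blast
    show "(\<lambda>i. nV (u - us i)) \<longlonglongrightarrow> 0" using lim V.commute[OF uV usV] by simp
    show "(\<lambda>i. nW (0 - min_grad W nW R (us i))) \<longlonglongrightarrow> 0" using grad W.minus[OF mgW] by simp
  qed
  then show "is_min_grad W nW R u 0"
    unfolding is_min_grad_def gradients_def
    using subspace_0[OF W.subspace] W.nonneg by simp
qed

lemma cone_unit_with_small_min_grad:
  assumes cone: "cone_in (Sob V W R) K"
    and no_bound: "\<forall>C>0. \<exists>u\<in>K. C * nW (min_grad W nW R u) < nV u" and \<epsilon>: "0 < \<epsilon>"
  obtains v where "v \<in> K" "nV v = 1" "nW (min_grad W nW R v) < \<epsilon>"
proof -
  obtain u where u: "u \<in> K" "(1 / \<epsilon>) * nW (min_grad W nW R u) < nV u"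
    using no_bound \<epsilon> by (meson divide_pos_pos zero_less_one)
  have uS: "u \<in> Sob V W R" and uV: "u \<in> V" using cone u(1) unfolding cone_in_def Sob_def by blast+
  have mgW: "min_grad W nW R u \<in> W" by (rule min_grad_in_W[OF uS])
  have "0 \<le> (1 / \<epsilon>) * nW (min_grad W nW R u)" using W.nonneg[OF mgW] \<epsilon> by simp
  then have pos: "nV u > 0" using u(2) by linarith
  define v where "v = (1 / nV u) *\<^sub>R u"
  show ?thesis
  proof (rule that)
    show "v \<in> K" unfolding v_def using cone u(1) pos unfolding cone_in_def by simp
    show "nV v = 1" unfolding v_def using V.scaleR[OF uV] pos by simp
    have "nW (min_grad W nW R v) = nW (min_grad W nW R u) / nV u"
      unfolding v_def using min_grad_scaleR(2)[OF uS, of "1 / nV u"] W.scaleR[OF mgW] pos by simp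
    also have "\<dots> < \<epsilon>" using u(2) pos \<epsilon> by (simp add: divide_less_eq field_simps)
    finally show "nW (min_grad W nW R v) < \<epsilon>" .
  qed
qed

lemma RK_cone_min_grad_bound:
  assumes RK: "RK_cone V nV W nW R K" and reg: "regular_cone W nW R K"
  shows "\<exists>C>0. \<forall>u\<in>K. nV u \<le> C * nW (min_grad W nW R u)"
proof (rule ccontr)
  assume "\<not> ?thesis"
  then have no_bound: "\<forall>C>0. \<exists>u\<in>K. C * nW (min_grad W nW R u) < nV u" by (simp add: not_le)
  have cone: "cone_in (Sob V W R) K" and KS: "K \<subseteq> Sob V W R"
    using RK unfolding RK_cone_def cone_in_def by blast+
  have "\<exists>v. v \<in> K \<and> nV v = 1 \<and> nW (min_grad W nW R v) < 1 / real (Suc i)" for i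
    using cone_unit_with_small_min_grad[OF cone no_bound, of "1 / real (Suc i)"] by auto
  then obtain vs where vs: "\<And>i. vs i \<in> K" "\<And>i. nV (vs i) = 1"
    "\<And>i. nW (min_grad W nW R (vs i)) < 1 / real (Suc i)"
    by metis
  have vsS: "vs i \<in> Sob V W R" for i using KS vs(1) by blast
  have grad: "(\<lambda>i. nW (min_grad W nW R (vs i))) \<longlonglongrightarrow> 0"
    using vs(3) W.nonneg[OF min_grad_in_W[OF vsS]]
    by (intro Lim_null_comparison[OF _ LIMSEQ_Suc[OF lim_inverse_n']] always_eventually allI)
       (simp add: inverse_eq_divide less_imp_le)
  have "nW (min_grad W nW R (vs i)) \<le> 1" for i
  proof -
    have "1 / real (Suc i) \<le> 1" by simp
    then show ?thesis using vs(3)[of i] by linarith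
  qed
  then have "(\<forall>i. vs i \<in> K) \<and> (\<exists>B. \<forall>i. nV (vs i) \<le> B) \<and> (\<exists>B. \<forall>i. nW (min_grad W nW R (vs i)) \<le> B)"
    using vs(1,2) by auto
  with RK obtain r v where r: "strict_mono r" and v: "v \<in> K" and lim: "(\<lambda>i. nV (vs (r i) - v)) \<longlonglongrightarrow> 0"
    unfolding RK_cone_def by blast
  have "min_grad W nW R v = 0"
  proof (rule min_grad_eq_0_if_limit[where us = "\<lambda>i. vs (r i)"])
    show "vs (r i) \<in> Sob V W R" for i by (rule vsS)
    show "v \<in> Sob V W R" using KS v by blast
    show "(\<lambda>i. nV (vs (r i) - v)) \<longlonglongrightarrow> 0" by (rule lim)
    show "(\<lambda>i. nW (min_grad W nW R (vs (r i)))) \<longlonglongrightarrow> 0"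
      using LIMSEQ_subseq_LIMSEQ[OF grad r] by (simp add: o_def)
  qed
  then have "v = 0" using reg v unfolding regular_cone_def by blast
  moreover have "nV v = 1"
  proof -
    have "(\<lambda>i. nV (vs (r i))) \<longlonglongrightarrow> nV v"
      by (rule V.tendsto_norm[OF _ _ lim]) (use vsS KS v in \<open>auto simp: Sob_def\<close>)
    then have "(\<lambda>i. 1) \<longlonglongrightarrow> nV v" using vs(2) by simp
    then show ?thesis by (rule LIMSEQ_unique[OF tendsto_const, symmetric])
  qed
  ultimately show False by simp
qed

end

theorem mainTheorem11:
  fixes V :: "'a::real_vector set" and nV :: "'a \<Rightarrow> real"
    and W :: "'b::real_vector set" and nW :: "'b \<Rightarrow> real"
    and R :: "('a \<times> 'b) set" and K :: "'a set"
  assumes "gradient_space V nV W nW R"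
    and "RK_cone V nV W nW R K"
    and "regular_cone W nW R K"
  shows "poincare_set V nV W nW R K \<and>
         (\<exists>C>0. \<forall>u\<in>K. nV u \<le> C * nW (min_grad W nW R u))"
proof -
  obtain C where C: "C > 0" "\<And>u. u \<in> K \<Longrightarrow> nV u \<le> C * nW (min_grad W nW R u)"
    using RK_cone_min_grad_bound[OF assms] by blast
  have KS: "K \<subseteq> Sob V W R" using assms(2) unfolding RK_cone_def cone_in_def by blast
  have "nV u \<le> C * nW g" if "u \<in> K" "g \<in> W" "(u, g) \<in> R" for u g
  proof -
    have "nW (min_grad W nW R u) \<le> nW g"
      using is_min_grad_min_grad[OF assms(1)] KS that unfolding is_min_grad_def gradients_def by blast
    then have "C * nW (min_grad W nW R u) \<le> C * nW g" using C(1) by (simp add: mult_left_mono)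
    then show ?thesis using C(2)[OF that(1)] by linarith
  qed
  then have "poincare_set V nV W nW R K" unfolding poincare_set_def using KS C(1) by blast
  then show ?thesis using C by blast
qed

end
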